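(* Suppose $S_X=S_Y=S$ is a finite nonempty set and $\varphi:S\times S\to\mathbb{R}$ is symmetric, i.e., $\varphi(a,b)=\varphi(b,a)$ for all $a,b\in S$. Then $\varphi\equiv0$ is enforceable if and only if there exists a trivial autocratic strategy or $\max_{\tau_X\in\Delta(S_X)}\min_{\tau_Y\in\Delta(S_Y)}\varphi(\tau_X,\tau_Y)=0$.
   Context: Two players $X,Y$ play a repeated game; $\Delta(S)$ denotes the probability distributions on $S$; $\varphi$ is extended bilinearly to mixed actions, $\varphi(\tau_X,\tau_Y)=\mathbb{E}_{s_X\sim\tau_X,s_Y\sim\tau_Y}[\varphi(s_X,s_Y)]$. Histories: $\mathcal{H}=\bigcup_{T\ge0}(S_X\times S_Y)^T$; behavioral strategies are maps $\sigma:\mathcal{H}\to\Delta(S)$; players independently draw actions each round from their strategies evaluated at the history of realized action pairs, with $\mathbb{E}_{\sigma_X,\sigma_Y}$ the expectation over the resulting play. For $\lambda\in[0,1)$, $\sigma_X$ is $(\varphi,\lambda)$-autocratic if for every behavioral strategy $\sigma_Y$, $\mathbb{E}_{\sigma_X,\sigma_Y}[(1-\lambda)\sum_{t\ge0}\lambda^t\varphi(s_X^t,s_Y^t)]=0$; it is $(\varphi,1)$-autocratic if for every $\sigma_Y$ the limit $\lim_{T\to\infty}\frac1{T+1}\sum_{t=0}^T\mathbb{E}_{\sigma_X,\sigma_Y}[\varphi(s_X^t,s_Y^t)]$ exists and equals $0$. $\varphi\equiv0$ is enforceable if a $(\varphi,\lambda)$-autocratic behavioral strategy exists for some $\lambda\in[0,1]$.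 A trivial autocratic strategy is a mixed action $\tau_X\in\Delta(S_X)$ with $\varphi(\tau_X,s_Y)=0$ for all $s_Y\in S_Y$, played unconditionally in every round. *)

theory Defs
  imports "HOL-Probability.Probability"
begin

text \<open>Common action set S is modelled as a finite type 'a (nonempty automatically).\<close>

type_synonym 'a history = "('a \<times> 'a) list"
type_synonym 'a strategy = "'a history \<Rightarrow> 'a pmf"

definition phi_mix :: "('a \<Rightarrow> 'a \<Rightarrow> real) \<Rightarrow> 'a pmf \<Rightarrow> 'a pmf \<Rightarrow> real" where
  "phi_mix \<phi> \<tau>X \<tau>Y = measure_pmf.expectation (pair_pmf \<tau>X \<tau>Y) (\<lambda>(a, b). \<phi> a b)"

fun hist_pmf :: "'a strategy \<Rightarrow> 'a strategy \<Rightarrow> nat \<Rightarrow> 'a history pmf" where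
  "hist_pmf \<sigma>X \<sigma>Y 0 = return_pmf []"
| "hist_pmf \<sigma>X \<sigma>Y (Suc t) =
     bind_pmf (hist_pmf \<sigma>X \<sigma>Y t)
       (\<lambda>h. map_pmf (\<lambda>p. h @ [p]) (pair_pmf (\<sigma>X h) (\<sigma>Y h)))"

definition round_pmf :: "'a strategy \<Rightarrow> 'a strategy \<Rightarrow> nat \<Rightarrow> ('a \<times> 'a) pmf" where
  "round_pmf \<sigma>X \<sigma>Y t = bind_pmf (hist_pmf \<sigma>X \<sigma>Y t) (\<lambda>h. pair_pmf (\<sigma>X h) (\<sigma>Y h))"

definition exp_round :: "('a \<Rightarrow> 'a \<Rightarrow> real) \<Rightarrow> 'a strategy \<Rightarrow> 'a strategy \<Rightarrow> nat \<Rightarrow> real" where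
  "exp_round \<phi> \<sigma>X \<sigma>Y t = measure_pmf.expectation (round_pmf \<sigma>X \<sigma>Y t) (\<lambda>(a, b). \<phi> a b)"

text \<open>For lambda < 1 the expectation of the discounted
  sum is written as the discounted sum of per-round expectations (legitimate since phi is
  bounded on the finite action set).\<close>
definition autocratic :: "('a \<Rightarrow> 'a \<Rightarrow> real) \<Rightarrow> real \<Rightarrow> 'a strategy \<Rightarrow> bool" where
  "autocratic \<phi> \<delta> \<sigma>X \<longleftrightarrow>
     (if \<delta> < 1
      then (\<forall>\<sigma>Y. (1 - \<delta>) * (\<Sum>t. \<delta> ^ t * exp_round \<phi> \<sigma>X \<sigma>Y t) = 0)
      else (\<forall>\<sigma>Y. (\<lambda>T. (\<Sum>t\<le>T. exp_round \<phi> \<sigma>X \<sigma>Y t) / real (T + 1)) \<longlonglongrightarrow> 0))"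

definition enforceable :: "('a \<Rightarrow> 'a \<Rightarrow> real) \<Rightarrow> bool" where
  "enforceable \<phi> \<longleftrightarrow> (\<exists>\<delta>\<in>{0..1}. \<exists>\<sigma>X. autocratic \<phi> \<delta> \<sigma>X)"

definition has_trivial_autocratic :: "('a \<Rightarrow> 'a \<Rightarrow> real) \<Rightarrow> bool" where
  "has_trivial_autocratic \<phi> \<longleftrightarrow> (\<exists>\<tau>X. \<forall>sY. phi_mix \<phi> \<tau>X (return_pmf sY) = 0)"

end

theory Submission
  imports Defs "HOL-Real_Asymp.Real_Asymp"
begin

text \<open>
  Let v be the maxmin value. If X enforces 0, then v = 0: for v > 0, Y plays a mixed action
  \<tau> with \<phi>(\<tau>, \<rho>) \<ge> c > 0 for all \<rho> in every round, and by symmetry every round then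
  pays at least c; for v < 0, Y answers each mixed action of X by one paying less than v/2.
  Either way the (discounted or Cesaro) average payoff is bounded away from 0.

  Conversely, a trivial autocratic strategy \<tau> gives \<phi>(\<tau>, \<cdot>) = 0 and, by symmetry,
  \<phi>(\<cdot>, \<tau>) = 0, so v = 0. If v = 0, Ville's alternative (the minimax theorem) and symmetry
  yield mixed actions p and q with \<phi>(p, \<cdot>) \<ge> 0 and \<phi>(q, \<cdot>) \<le> 0. Playing q while the
  cumulative payoff S is positive and p otherwise makes every increment of S point towards 0
  in expectation, so E[S(T)^2] \<le> T B^2 for a bound B on |\<phi>|; hence
  |E[S(T)]| \<le> B \<surd>T and the average payoff tends to 0.
\<close>

lemma expectation_pmf_finite_support:
  fixes f :: "'b \<Rightarrow> real"
  assumes "finite A" "set_pmf M \<subseteq> A"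
  shows "measure_pmf.expectation M f = (\<Sum>a\<in>A. pmf M a * f a)"
  using integral_measure_pmf[OF assms(1), of M f] assms(2) by auto

lemma expectation_bind_pmf_finite:
  fixes f :: "'c \<Rightarrow> real"
  assumes M: "finite (set_pmf M)" and N: "\<And>x. x \<in> set_pmf M \<Longrightarrow> finite (set_pmf (N x))"
  shows "measure_pmf.expectation (bind_pmf M N) f =
         measure_pmf.expectation M (\<lambda>x. measure_pmf.expectation (N x) f)"
proof -
  define U where "U = (\<Union>x\<in>set_pmf M. set_pmf (N x))"
  have U: "finite U" using assms by (auto simp: U_def)
  have inner: "measure_pmf.expectation (N x) f = (\<Sum>y\<in>U. pmf (N x) y * f y)" if "x \<in> set_pmf M" for x
    using that by (intro expectation_pmf_finite_support[OF U]) (auto simp: U_def)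
  have "measure_pmf.expectation (bind_pmf M N) f = (\<Sum>y\<in>U. pmf (bind_pmf M N) y * f y)"
    by (rule expectation_pmf_finite_support[OF U]) (auto simp: U_def)
  also have "\<dots> = (\<Sum>y\<in>U. (\<Sum>x\<in>set_pmf M. pmf M x * pmf (N x) y) * f y)"
    by (simp add: pmf_bind expectation_pmf_finite_support[OF M])
  also have "\<dots> = (\<Sum>x\<in>set_pmf M. pmf M x * (\<Sum>y\<in>U. pmf (N x) y * f y))"
    by (simp add: sum_distrib_left sum_distrib_right sum.swap[of _ U] mult.assoc)
  also have "\<dots> = (\<Sum>x\<in>set_pmf M. pmf M x * measure_pmf.expectation (N x) f)"
    by (simp add: inner)
  also have "\<dots> = measure_pmf.expectation M (\<lambda>x. measure_pmf.expectation (N x) f)"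
    by (rule expectation_pmf_finite_support[OF M subset_refl, symmetric])
  finally show ?thesis .
qed

lemma expectation_ge_const_pmf:
  fixes f :: "'b \<Rightarrow> real"
  assumes "finite (set_pmf M)" "\<And>x. x \<in> set_pmf M \<Longrightarrow> c \<le> f x"
  shows "c \<le> measure_pmf.expectation M f"
  using assms by (intro measure_pmf.integral_ge_const integrable_measure_pmf_finite)
    (auto simp: AE_measure_pmf_iff)

lemma expectation_le_const_pmf:
  fixes f :: "'b \<Rightarrow> real"
  assumes "finite (set_pmf M)" "\<And>x. x \<in> set_pmf M \<Longrightarrow> f x \<le> c"
  shows "measure_pmf.expectation M f \<le> c"
  using assms by (intro measure_pmf.integral_le_const integrable_measure_pmf_finite)
    (auto simp: AE_measure_pmf_iff)

lemma square_expectation_le: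
  fixes f :: "'b \<Rightarrow> real"
  assumes "finite (set_pmf M)"
  shows "(measure_pmf.expectation M f)\<^sup>2 \<le> measure_pmf.expectation M (\<lambda>x. (f x)\<^sup>2)"
  using measure_pmf.variance_positive[of M f] measure_pmf.variance_eq[of M f]
  by (simp add: integrable_measure_pmf_finite[OF assms])

lemma expectation_square_shift_le:
  fixes f :: "'b::finite \<Rightarrow> real"
  assumes "s * measure_pmf.expectation M f \<le> 0" "\<And>x. \<bar>f x\<bar> \<le> B"
  shows "measure_pmf.expectation M (\<lambda>x. (s + f x)\<^sup>2) \<le> s\<^sup>2 + B\<^sup>2"
proof -
  have integrable: "integrable M g" for g :: "'b \<Rightarrow> real"
    by (simp add: integrable_measure_pmf_finite)
  have "(f x)\<^sup>2 \<le> B\<^sup>2" for x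
    using power_mono[OF assms(2)[of x] abs_ge_zero, of 2] by simp
  then have "measure_pmf.expectation M (\<lambda>x. (f x)\<^sup>2) \<le> B\<^sup>2"
    by (intro expectation_le_const_pmf) simp_all
  moreover have "measure_pmf.expectation M (\<lambda>x. (s + f x)\<^sup>2) =
      s\<^sup>2 + 2 * (s * measure_pmf.expectation M f) + measure_pmf.expectation M (\<lambda>x. (f x)\<^sup>2)"
    by (simp add: power2_sum integrable algebra_simps)
  ultimately show ?thesis using assms(1) by linarith
qed

section \<open>Ville's theorem of the alternative\<close>

lemma ville_alternative:
  fixes A :: "'i::finite \<Rightarrow> 'j::finite \<Rightarrow> real"
  assumes no_y: "\<nexists>y. (\<forall>j. 0 \<le> y j) \<and> sum y UNIV = 1 \<and> (\<forall>i. (\<Sum>j\<in>UNIV. A i j * y j) \<le> 0)"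
  shows "\<exists>x. (\<forall>i. 0 \<le> x i) \<and> sum x UNIV = 1 \<and> (\<forall>j. 0 < (\<Sum>i\<in>UNIV. x i * A i j))"
proof -
  txt \<open>Separate the image of the simplex under A from the nonpositive orthant; the normalised
    negated normal vector is the required x.\<close>
  define M :: "real^'j^'i" where "M = (\<chi> i j. A i j)"
  define D where "D = {y :: real^'j. (\<forall>j. 0 \<le> y $ j) \<and> (\<Sum>j\<in>UNIV. y $ j) = 1}"
  define N where "N = {z :: real^'i. \<forall>i. z $ i \<le> 0}"
  have M_mult: "(M *v y) $ i = (\<Sum>j\<in>UNIV. A i j * y $ j)" for y i
    by (simp add: M_def matrix_vector_mult_def)
  have axis_in_D: "axis j 1 \<in> D" for j
    by (simp add: D_def axis_def)
  have "bounded D"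
  proof (rule boundedI)
    fix y assume "y \<in> D"
    then show "norm y \<le> 1" using norm_le_l1_cart[of y] by (simp add: D_def)
  qed
  moreover have "closed D"
    unfolding D_def
    by (intro closed_Collect_conj closed_Collect_all closed_Collect_le closed_Collect_eq continuous_intros)
  ultimately have "compact ((*v) M ` D)"
    by (intro compact_continuous_image linear_continuous_on matrix_vector_mul_bounded_linear)
      (simp add: compact_eq_bounded_closed)
  moreover have "convex ((*v) M ` D)"
    by (intro convex_linear_image matrix_vector_mul_linear)
      (auto simp: convex_def D_def sum.distrib sum_distrib_left[symmetric])
  moreover have "convex N" "closed N"
    unfolding N_def
    by (auto simp: convex_def intro!: add_nonpos_nonpos mult_nonneg_nonpos
        closed_Collect_all closed_Collect_le continuous_intros)
  moreover have "(*v) M ` D \<inter> N = {}"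
    using no_y by (fastforce simp: D_def N_def M_mult)
  ultimately obtain a b where
    sep_D: "\<And>y. y \<in> D \<Longrightarrow> inner a (M *v y) < b" and sep_N: "\<And>z. z \<in> N \<Longrightarrow> b < inner a z"
    using separating_hyperplane_compact_closed[of "(*v) M ` D" N] axis_in_D by blast
  have "b < 0" using sep_N[of 0] by (simp add: N_def)
  have a_nonpos: "a $ i \<le> 0" for i
  proof (rule ccontr)
    assume "\<not> a $ i \<le> 0"
    then have "- ((\<bar>b\<bar> + 1) / a $ i) *\<^sub>R axis i 1 \<in> N"
      by (simp add: N_def axis_def)
    then have "b < - (\<bar>b\<bar> + 1)"
      using sep_N \<open>\<not> a $ i \<le> 0\<close> by (fastforce simp: inner_axis)
    then show False by linarith
  qed
  define w where "w i = - a $ i" for i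
  have w_nonneg: "0 \<le> w i" for i using a_nonpos[of i] by (simp add: w_def)
  have column: "0 < (\<Sum>i\<in>UNIV. w i * A i j)" for j
  proof -
    have "inner a (M *v axis j 1) < b" by (rule sep_D[OF axis_in_D])
    then show ?thesis
      using \<open>b < 0\<close> by (simp add: w_def matrix_vector_mult_basis column_def M_def inner_vec_def sum_negf)
  qed
  define s where "s = sum w UNIV"
  have "0 < s"
  proof (rule ccontr)
    assume "\<not> 0 < s"
    then have "s = 0" unfolding s_def by (meson sum_nonneg w_nonneg order.antisym not_le)
    then have "w i = 0" for i using w_nonneg by (simp add: s_def sum_nonneg_eq_0_iff)
    then show False using column[of undefined] by simp
  qed
  show ?thesis
  proof (intro exI[of _ "\<lambda>i. w i / s"] conjI allI)
    show "0 \<le> w i / s" for i using w_nonneg[of i] \<open>0 < s\<close> by simp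
    show "(\<Sum>i\<in>UNIV. w i / s) = 1" using \<open>0 < s\<close> by (simp add: s_def flip: sum_divide_distrib)
    show "0 < (\<Sum>i\<in>UNIV. w i / s * A i j)" for j
      using column[of j] \<open>0 < s\<close> by (simp add: sum_divide_distrib[symmetric])
  qed
qed

lemma pmf_with_weightsE:
  fixes w :: "'a::finite \<Rightarrow> real"
  assumes "\<And>a. 0 \<le> w a" "sum w UNIV = 1"
  obtains \<tau> where "\<And>a. pmf \<tau> a = w a"
proof -
  have "(\<integral>\<^sup>+a. ennreal (w a) \<partial>count_space UNIV) = ennreal (sum w UNIV)"
    using assms(1) by (simp add: nn_integral_count_space_finite sum_ennreal)
  then show ?thesis
    using pmf_embed_pmf[of w] assms by (intro that[of "embed_pmf w"]) simp_all
qed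

section \<open>Mixed actions and the maxmin value\<close>

lemma phi_mix_commute:
  assumes "\<And>a b. \<phi> a b = \<phi> b a"
  shows "phi_mix \<phi> \<tau> \<rho> = phi_mix \<phi> \<rho> \<tau>"
  unfolding phi_mix_def by (subst pair_commute_pmf) (simp add: case_prod_unfold assms)

lemma phi_mix_uminus: "phi_mix (\<lambda>a b. - \<phi> a b) \<tau> \<rho> = - phi_mix \<phi> \<tau> \<rho>"
  unfolding phi_mix_def by (simp add: case_prod_unfold)

lemma phi_mix_return_right: "phi_mix \<phi> \<tau> (return_pmf b) = measure_pmf.expectation \<tau> (\<lambda>a. \<phi> a b)"
  unfolding phi_mix_def by (simp add: pair_return_pmf2)

lemma phi_mix_return_left: "phi_mix \<phi> (return_pmf a) \<rho> = measure_pmf.expectation \<rho> (\<phi> a)"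
  unfolding phi_mix_def by (simp add: pair_return_pmf1)

lemma phi_mix_eq_expectation_pure:
  fixes \<phi> :: "'a::finite \<Rightarrow> 'a \<Rightarrow> real"
  shows "phi_mix \<phi> \<tau> \<rho> = measure_pmf.expectation \<rho> (\<lambda>b. phi_mix \<phi> \<tau> (return_pmf b))"
proof -
  have "pair_pmf \<tau> \<rho> = bind_pmf \<rho> (\<lambda>b. pair_pmf \<tau> (return_pmf b))"
    unfolding pair_pmf_def by (subst bind_commute_pmf) (simp add: bind_return_pmf)
  then show ?thesis
    unfolding phi_mix_def by (simp add: expectation_bind_pmf_finite)
qed

lemma phi_mix_ge_if_pure_ge:
  fixes \<phi> :: "'a::finite \<Rightarrow> 'a \<Rightarrow> real"
  assumes "\<And>b. c \<le> phi_mix \<phi> \<tau> (return_pmf b)"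
  shows "c \<le> phi_mix \<phi> \<tau> \<rho>"
  unfolding phi_mix_eq_expectation_pure[of \<phi> \<tau> \<rho>]
  by (rule expectation_ge_const_pmf) (simp_all add: assms)

lemma phi_mix_le_if_pure_le:
  fixes \<phi> :: "'a::finite \<Rightarrow> 'a \<Rightarrow> real"
  assumes "\<And>b. phi_mix \<phi> \<tau> (return_pmf b) \<le> c"
  shows "phi_mix \<phi> \<tau> \<rho> \<le> c"
  unfolding phi_mix_eq_expectation_pure[of \<phi> \<tau> \<rho>]
  by (rule expectation_le_const_pmf) (simp_all add: assms)

lemma phi_mix_uniformly_posE:
  fixes \<phi> :: "'a::finite \<Rightarrow> 'a \<Rightarrow> real"
  assumes "\<And>b. 0 < phi_mix \<phi> \<tau> (return_pmf b)"
  obtains c where "0 < c" "\<And>\<rho>. c \<le> phi_mix \<phi> \<tau> \<rho>"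
proof
  let ?c = "Min (range (\<lambda>b. phi_mix \<phi> \<tau> (return_pmf b)))"
  show "0 < ?c" using assms by simp
  show "?c \<le> phi_mix \<phi> \<tau> \<rho>" for \<rho> by (rule phi_mix_ge_if_pure_ge) simp
qed

lemma payoff_boundedE:
  fixes \<phi> :: "'a::finite \<Rightarrow> 'a \<Rightarrow> real"
  obtains B where "\<And>a b. \<bar>\<phi> a b\<bar> \<le> B"
proof
  show "\<bar>\<phi> a b\<bar> \<le> Max (range (\<lambda>(a, b). \<bar>\<phi> a b\<bar>))" for a b
    by (rule Max_ge) (auto intro: image_eqI[of _ _ "(a, b)"])
qed

lemma phi_mix_bounded:
  fixes \<phi> :: "'a::finite \<Rightarrow> 'a \<Rightarrow> real"
  assumes "\<And>a b. \<bar>\<phi> a b\<bar> \<le> B"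
  shows "\<bar>phi_mix \<phi> \<tau> \<rho>\<bar> \<le> B"
proof -
  have "- B \<le> \<phi> a b" "\<phi> a b \<le> B" for a b
    using assms[of a b] by linarith+
  then have "- B \<le> phi_mix \<phi> \<tau> \<rho>" "phi_mix \<phi> \<tau> \<rho> \<le> B"
    unfolding phi_mix_def by (auto intro!: expectation_ge_const_pmf expectation_le_const_pmf)
  then show ?thesis by linarith
qed

lemma phi_mix_alternative:
  fixes \<phi> :: "'a::finite \<Rightarrow> 'a \<Rightarrow> real"
  obtains q where "\<And>a. phi_mix \<phi> (return_pmf a) q \<le> 0"
    | p where "\<And>b. 0 < phi_mix \<phi> p (return_pmf b)"
proof (cases "\<exists>y. (\<forall>j. 0 \<le> y j) \<and> sum y UNIV = 1 \<and> (\<forall>i. (\<Sum>j\<in>UNIV. \<phi> i j * y j) \<le> 0)")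
  case True
  then obtain y where weights: "\<And>j. 0 \<le> y j" "sum y UNIV = 1"
    and y: "\<And>i. (\<Sum>j\<in>UNIV. \<phi> i j * y j) \<le> 0"
    by blast
  from weights obtain q where "\<And>j. pmf q j = y j" by (rule pmf_with_weightsE) blast
  then have "phi_mix \<phi> (return_pmf a) q \<le> 0" for a
    using y[of a] by (simp add: phi_mix_return_left expectation_pmf_finite_support[of UNIV] mult.commute)
  then show ?thesis by (rule that(1))
next
  case False
  then obtain x where weights: "\<And>i. 0 \<le> x i" "sum x UNIV = 1"
    and x: "\<And>j. 0 < (\<Sum>i\<in>UNIV. x i * \<phi> i j)"
    using ville_alternative[of \<phi>] by blast
  from weights obtain p where "\<And>i. pmf p i = x i" by (rule pmf_with_weightsE) blast
  then have "0 < phi_mix \<phi> p (return_pmf b)" for b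
    using x[of b] by (simp add: phi_mix_return_right expectation_pmf_finite_support[of UNIV])
  then show ?thesis by (rule that(2))
qed

definition maxmin_value :: "('a \<Rightarrow> 'a \<Rightarrow> real) \<Rightarrow> real" where
  "maxmin_value \<phi> = (SUP \<tau>X. INF \<tau>Y. phi_mix \<phi> \<tau>X \<tau>Y)"

lemma bdd_below_phi_mix:
  fixes \<phi> :: "'a::finite \<Rightarrow> 'a \<Rightarrow> real"
  shows "bdd_below (range (phi_mix \<phi> \<tau>))"
proof -
  obtain B where B: "\<And>a b. \<bar>\<phi> a b\<bar> \<le> B" using payoff_boundedE[of \<phi>] by blast
  have "- B \<le> phi_mix \<phi> \<tau> \<rho>" for \<rho>
    using phi_mix_bounded[of \<phi> B \<tau> \<rho>, OF B] by linarith
  then show ?thesis by (intro bdd_belowI2)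
qed

lemma bdd_above_guaranteed_payoff:
  fixes \<phi> :: "'a::finite \<Rightarrow> 'a \<Rightarrow> real"
  shows "bdd_above (range (\<lambda>\<tau>. INF \<rho>. phi_mix \<phi> \<tau> \<rho>))"
proof -
  obtain B where B: "\<And>a b. \<bar>\<phi> a b\<bar> \<le> B" using payoff_boundedE[of \<phi>] by blast
  have "(INF \<rho>. phi_mix \<phi> \<tau> \<rho>) \<le> B" for \<tau>
    using cINF_lower[OF bdd_below_phi_mix UNIV_I, of \<phi> \<tau> \<tau>] phi_mix_bounded[of \<phi> B \<tau> \<tau>, OF B]
    by linarith
  then show ?thesis by (intro bdd_aboveI2)
qed

lemma maxmin_value_ge:
  fixes \<phi> :: "'a::finite \<Rightarrow> 'a \<Rightarrow> real"
  assumes "\<And>\<rho>. c \<le> phi_mix \<phi> \<tau> \<rho>"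
  shows "c \<le> maxmin_value \<phi>"
proof -
  have "c \<le> (INF \<rho>. phi_mix \<phi> \<tau> \<rho>)" using assms by (intro cINF_greatest) auto
  also have "\<dots> \<le> maxmin_value \<phi>"
    unfolding maxmin_value_def by (rule cSUP_upper[OF UNIV_I bdd_above_guaranteed_payoff])
  finally show ?thesis .
qed

lemma maxmin_value_le:
  fixes \<phi> :: "'a::finite \<Rightarrow> 'a \<Rightarrow> real"
  assumes "\<And>\<tau>. phi_mix \<phi> \<tau> (\<rho> \<tau>) \<le> c"
  shows "maxmin_value \<phi> \<le> c"
  unfolding maxmin_value_def
  using assms by (intro cSUP_least cINF_lower2[OF bdd_below_phi_mix]) auto

lemma maxmin_value_posE:
  fixes \<phi> :: "'a::finite \<Rightarrow> 'a \<Rightarrow> real"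
  assumes "0 < maxmin_value \<phi>"
  obtains \<tau> c where "0 < c" "\<And>\<rho>. c \<le> phi_mix \<phi> \<tau> \<rho>"
proof -
  obtain \<tau> where "0 < (INF \<rho>. phi_mix \<phi> \<tau> \<rho>)"
    using assms less_cSUP_iff[OF UNIV_not_empty bdd_above_guaranteed_payoff]
    unfolding maxmin_value_def by blast
  then show ?thesis
    using that cINF_lower[OF bdd_below_phi_mix] by blast
qed

lemma maxmin_value_lessE:
  fixes \<phi> :: "'a::finite \<Rightarrow> 'a \<Rightarrow> real"
  assumes "maxmin_value \<phi> < c"
  obtains \<rho> where "\<And>\<tau>. phi_mix \<phi> \<tau> (\<rho> \<tau>) < c"
proof -
  have "\<exists>\<rho>. phi_mix \<phi> \<tau> \<rho> < c" for \<tau>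
  proof -
    have "(INF \<rho>. phi_mix \<phi> \<tau> \<rho>) \<le> maxmin_value \<phi>"
      unfolding maxmin_value_def by (rule cSUP_upper[OF UNIV_I bdd_above_guaranteed_payoff])
    with assms have "(INF \<rho>. phi_mix \<phi> \<tau> \<rho>) < c" by linarith
    then show ?thesis by (simp add: cINF_less_iff[OF _ bdd_below_phi_mix])
  qed
  then show ?thesis using that by metis
qed

lemma nonpos_mixed_actionE:
  fixes \<phi> :: "'a::finite \<Rightarrow> 'a \<Rightarrow> real"
  assumes sym: "\<And>a b. \<phi> a b = \<phi> b a" and "maxmin_value \<phi> \<le> 0"
  obtains q where "\<And>b. phi_mix \<phi> q (return_pmf b) \<le> 0"
proof (rule phi_mix_alternative[of \<phi>])
  fix q assume q: "\<And>a. phi_mix \<phi> (return_pmf a) q \<le> 0"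
  have "phi_mix \<phi> q (return_pmf b) \<le> 0" for b
    using q[of b] phi_mix_commute[of \<phi> q "return_pmf b", OF sym] by simp
  then show thesis by (rule that)
next
  fix p assume "\<And>b. 0 < phi_mix \<phi> p (return_pmf b)"
  then obtain c where "0 < c" and c: "\<And>\<rho>. c \<le> phi_mix \<phi> p \<rho>"
    by (rule phi_mix_uniformly_posE) blast
  have "c \<le> maxmin_value \<phi>" using c by (rule maxmin_value_ge)
  then show thesis using assms(2) \<open>0 < c\<close> by linarith
qed

lemma nonneg_mixed_actionE:
  fixes \<phi> :: "'a::finite \<Rightarrow> 'a \<Rightarrow> real"
  assumes sym: "\<And>a b. \<phi> a b = \<phi> b a" and "0 \<le> maxmin_value \<phi>"
  obtains p where "\<And>b. 0 \<le> phi_mix \<phi> p (return_pmf b)"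
proof (rule phi_mix_alternative[of "\<lambda>a b. - \<phi> a b"])
  fix p assume p: "\<And>a. phi_mix (\<lambda>a b. - \<phi> a b) (return_pmf a) p \<le> 0"
  have "0 \<le> phi_mix \<phi> p (return_pmf b)" for b
    using p[of b] phi_mix_commute[of \<phi> p "return_pmf b", OF sym] by (simp add: phi_mix_uminus)
  then show thesis by (rule that)
next
  fix q assume "\<And>b. 0 < phi_mix (\<lambda>a b. - \<phi> a b) q (return_pmf b)"
  then obtain c where "0 < c" and c: "\<And>\<rho>. c \<le> phi_mix (\<lambda>a b. - \<phi> a b) q \<rho>"
    by (rule phi_mix_uniformly_posE) blast
  have "phi_mix \<phi> \<tau> q \<le> - c" for \<tau>
    using c[of \<tau>] by (simp add: phi_mix_uminus phi_mix_commute[of \<phi> \<tau> q, OF sym])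
  then have "maxmin_value \<phi> \<le> - c" by (rule maxmin_value_le)
  then show thesis using assms(2) \<open>0 < c\<close> by linarith
qed

lemma maxmin_value_eq_0_if_trivial_autocratic:
  fixes \<phi> :: "'a::finite \<Rightarrow> 'a \<Rightarrow> real"
  assumes sym: "\<And>a b. \<phi> a b = \<phi> b a" and "has_trivial_autocratic \<phi>"
  shows "maxmin_value \<phi> = 0"
proof -
  obtain \<tau> where \<tau>: "\<And>b. phi_mix \<phi> \<tau> (return_pmf b) = 0"
    using assms(2) by (auto simp: has_trivial_autocratic_def)
  have zero: "phi_mix \<phi> \<tau> \<rho> = 0" for \<rho>
    unfolding phi_mix_eq_expectation_pure[of \<phi> \<tau> \<rho>] by (simp add: \<tau>)
  have "0 \<le> maxmin_value \<phi>" by (rule maxmin_value_ge[of 0 \<phi> \<tau>]) (simp add: zero)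
  moreover have "phi_mix \<phi> \<tau>' \<tau> = 0" for \<tau>'
    using phi_mix_commute[of \<phi> \<tau>' \<tau>, OF sym] zero by simp
  then have "maxmin_value \<phi> \<le> 0"
    by (intro maxmin_value_le[where \<rho> = "\<lambda>_. \<tau>"]) simp
  ultimately show ?thesis by simp
qed

section \<open>Enforcing zero forces a zero maxmin value\<close>

lemma summable_discounted:
  fixes e :: "nat \<Rightarrow> real"
  assumes "0 \<le> \<delta>" "\<delta> < 1" "\<And>t. \<bar>e t\<bar> \<le> B"
  shows "summable (\<lambda>t. \<delta> ^ t * e t)"
proof (rule summable_comparison_test)
  show "\<exists>N. \<forall>t\<ge>N. norm (\<delta> ^ t * e t) \<le> \<delta> ^ t * B"
    using assms by (auto simp: abs_mult intro!: mult_left_mono)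
  show "summable (\<lambda>t. \<delta> ^ t * B)"
    using assms by (intro summable_mult2 summable_geometric) simp
qed

lemma discounted_average_ge:
  fixes e :: "nat \<Rightarrow> real"
  assumes "0 \<le> \<delta>" "\<delta> < 1" "\<And>t. \<bar>e t\<bar> \<le> B" "\<And>t. c \<le> e t"
  shows "c \<le> (1 - \<delta>) * (\<Sum>t. \<delta> ^ t * e t)"
proof -
  have geometric: "summable (\<lambda>t. \<delta> ^ t)" using assms by (intro summable_geometric) simp
  have "c / (1 - \<delta>) = (\<Sum>t. \<delta> ^ t * c)"
    using suminf_mult2[OF geometric, of c] suminf_geometric[of \<delta>] assms by simp
  also have "\<dots> \<le> (\<Sum>t. \<delta> ^ t * e t)"
    using assms by (intro suminf_le summable_mult2 geometric summable_discounted mult_left_mono) auto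
  finally show ?thesis using assms by (simp add: field_simps)
qed

lemma cesaro_average_ge:
  fixes e :: "nat \<Rightarrow> real"
  assumes "\<And>t. c \<le> e t"
  shows "c \<le> (\<Sum>t\<le>T. e t) / real (T + 1)"
proof -
  have "(\<Sum>t\<le>T. c) \<le> (\<Sum>t\<le>T. e t)" by (intro sum_mono assms)
  then show ?thesis by (simp add: field_simps)
qed

lemma finite_set_hist_pmf: "finite (set_pmf (hist_pmf (\<sigma>X :: 'a::finite strategy) \<sigma>Y t))"
  by (induction t) auto

lemma expectation_hist_pmf_Suc:
  fixes f :: "'a::finite history \<Rightarrow> real"
  shows "measure_pmf.expectation (hist_pmf \<sigma>X \<sigma>Y (Suc t)) f =
    measure_pmf.expectation (hist_pmf \<sigma>X \<sigma>Y t)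
      (\<lambda>h. measure_pmf.expectation (pair_pmf (\<sigma>X h) (\<sigma>Y h)) (\<lambda>p. f (h @ [p])))"
  by (simp add: expectation_bind_pmf_finite finite_set_hist_pmf)

lemma exp_round_eq_expectation_hist:
  fixes \<phi> :: "'a::finite \<Rightarrow> 'a \<Rightarrow> real"
  shows "exp_round \<phi> \<sigma>X \<sigma>Y t =
    measure_pmf.expectation (hist_pmf \<sigma>X \<sigma>Y t) (\<lambda>h. phi_mix \<phi> (\<sigma>X h) (\<sigma>Y h))"
  unfolding exp_round_def round_pmf_def phi_mix_def
  by (simp add: expectation_bind_pmf_finite finite_set_hist_pmf)

lemma exp_round_bounded:
  fixes \<phi> :: "'a::finite \<Rightarrow> 'a \<Rightarrow> real"
  assumes "\<And>a b. \<bar>\<phi> a b\<bar> \<le> B"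
  shows "\<bar>exp_round \<phi> \<sigma>X \<sigma>Y t\<bar> \<le> B"
proof -
  have "- B \<le> phi_mix \<phi> \<tau> \<rho>" "phi_mix \<phi> \<tau> \<rho> \<le> B" for \<tau> \<rho>
    using phi_mix_bounded[of \<phi> B \<tau> \<rho>, OF assms] by linarith+
  then have "- B \<le> exp_round \<phi> \<sigma>X \<sigma>Y t" "exp_round \<phi> \<sigma>X \<sigma>Y t \<le> B"
    unfolding exp_round_eq_expectation_hist
    by (auto intro!: expectation_ge_const_pmf expectation_le_const_pmf finite_set_hist_pmf)
  then show ?thesis by linarith
qed

lemma exp_round_uminus:
  "exp_round (\<lambda>a b. - \<phi> a b) \<sigma>X \<sigma>Y t = - exp_round \<phi> \<sigma>X \<sigma>Y t"
  unfolding exp_round_def by (simp add: case_prod_unfold)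

lemma autocratic_uminus:
  fixes \<phi> :: "'a::finite \<Rightarrow> 'a \<Rightarrow> real"
  assumes "autocratic \<phi> \<delta> \<sigma>X" "0 \<le> \<delta>"
  shows "autocratic (\<lambda>a b. - \<phi> a b) \<delta> \<sigma>X"
proof (cases "\<delta> < 1")
  case True
  obtain B where "\<And>a b. \<bar>\<phi> a b\<bar> \<le> B" using payoff_boundedE[of \<phi>] by blast
  then have "summable (\<lambda>t. \<delta> ^ t * exp_round \<phi> \<sigma>X \<sigma>Y t)" for \<sigma>Y
    using True assms(2) by (intro summable_discounted exp_round_bounded)
  then show ?thesis
    using assms True by (simp add: autocratic_def exp_round_uminus suminf_minus)
next
  case False
  have "(\<lambda>T. - ((\<Sum>t\<le>T. exp_round \<phi> \<sigma>X \<sigma>Y t) / real (T + 1))) \<longlonglongrightarrow> 0" for \<sigma>Y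
  proof -
    have "(\<lambda>T. (\<Sum>t\<le>T. exp_round \<phi> \<sigma>X \<sigma>Y t) / real (T + 1)) \<longlonglongrightarrow> 0"
      using assms False by (simp add: autocratic_def)
    then show ?thesis by (rule tendsto_minus[where a = 0, simplified])
  qed
  then show ?thesis
    using False by (simp add: autocratic_def exp_round_uminus sum_negf)
qed

lemma not_autocratic_if_opponent_secures:
  fixes \<phi> :: "'a::finite \<Rightarrow> 'a \<Rightarrow> real"
  assumes "0 \<le> \<delta>" "0 < c" "\<And>h. c \<le> phi_mix \<phi> (\<sigma>X h) (\<sigma>Y h)"
  shows "\<not> autocratic \<phi> \<delta> \<sigma>X"
proof
  assume autocratic: "autocratic \<phi> \<delta> \<sigma>X"
  obtain B where B: "\<And>a b. \<bar>\<phi> a b\<bar> \<le> B" using payoff_boundedE[of \<phi>] by blast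
  have round: "c \<le> exp_round \<phi> \<sigma>X \<sigma>Y t" for t
    unfolding exp_round_eq_expectation_hist
    by (intro expectation_ge_const_pmf finite_set_hist_pmf assms)
  show False
  proof (cases "\<delta> < 1")
    case True
    have "c \<le> (1 - \<delta>) * (\<Sum>t. \<delta> ^ t * exp_round \<phi> \<sigma>X \<sigma>Y t)"
      using assms(1) True exp_round_bounded[OF B] round by (rule discounted_average_ge)
    then show False using autocratic True \<open>0 < c\<close> by (simp add: autocratic_def)
  next
    case False
    with autocratic have "(\<lambda>T. (\<Sum>t\<le>T. exp_round \<phi> \<sigma>X \<sigma>Y t) / real (T + 1)) \<longlonglongrightarrow> 0"
      by (simp add: autocratic_def)
    moreover have "c \<le> (\<Sum>t\<le>T. exp_round \<phi> \<sigma>X \<sigma>Y t) / real (T + 1)" for T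
      using round by (rule cesaro_average_ge)
    ultimately have "c \<le> 0" by (intro LIMSEQ_le_const) auto
    then show False using \<open>0 < c\<close> by simp
  qed
qed

lemma maxmin_value_nonpos_if_autocratic:
  fixes \<phi> :: "'a::finite \<Rightarrow> 'a \<Rightarrow> real"
  assumes sym: "\<And>a b. \<phi> a b = \<phi> b a" and "autocratic \<phi> \<delta> \<sigma>X" "0 \<le> \<delta>"
  shows "maxmin_value \<phi> \<le> 0"
proof (rule ccontr)
  assume "\<not> maxmin_value \<phi> \<le> 0"
  then have "0 < maxmin_value \<phi>" by simp
  then obtain \<tau> c where "0 < c" and \<tau>: "\<And>\<rho>. c \<le> phi_mix \<phi> \<tau> \<rho>"
    by (rule maxmin_value_posE) blast
  have "c \<le> phi_mix \<phi> (\<sigma>X h) \<tau>" for h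
    unfolding phi_mix_commute[of \<phi> "\<sigma>X h" \<tau>, OF sym] by (rule \<tau>)
  then have "\<not> autocratic \<phi> \<delta> \<sigma>X"
    using \<open>0 \<le> \<delta>\<close> \<open>0 < c\<close> by (intro not_autocratic_if_opponent_secures[where \<sigma>Y = "\<lambda>_. \<tau>"])
  with assms show False by blast
qed

lemma maxmin_value_nonneg_if_autocratic:
  fixes \<phi> :: "'a::finite \<Rightarrow> 'a \<Rightarrow> real"
  assumes "autocratic \<phi> \<delta> \<sigma>X" "0 \<le> \<delta>"
  shows "0 \<le> maxmin_value \<phi>"
proof (rule ccontr)
  define v where "v = maxmin_value \<phi>"
  assume "\<not> 0 \<le> maxmin_value \<phi>"
  then have "v < 0" by (simp add: v_def)
  then obtain \<rho> where \<rho>: "\<And>\<tau>. phi_mix \<phi> \<tau> (\<rho> \<tau>) < v / 2"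
    using maxmin_value_lessE[of \<phi> "v / 2"] by (auto simp: v_def)
  have "- v / 2 \<le> phi_mix (\<lambda>a b. - \<phi> a b) (\<sigma>X h) (\<rho> (\<sigma>X h))" for h
    using \<rho>[of "\<sigma>X h"] by (simp add: phi_mix_uminus)
  then have "\<not> autocratic (\<lambda>a b. - \<phi> a b) \<delta> \<sigma>X"
    using \<open>0 \<le> \<delta>\<close> \<open>v < 0\<close> by (intro not_autocratic_if_opponent_secures[where c = "- v / 2"]) auto
  with autocratic_uminus[OF assms] show False by contradiction
qed

section \<open>A switching strategy enforces zero\<close>

definition cumulative_payoff :: "('a \<Rightarrow> 'a \<Rightarrow> real) \<Rightarrow> 'a history \<Rightarrow> real" where
  "cumulative_payoff \<phi> h = (\<Sum>(a, b)\<leftarrow>h. \<phi> a b)"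

lemma cumulative_payoff_Nil [simp]: "cumulative_payoff \<phi> [] = 0"
  by (simp add: cumulative_payoff_def)

lemma cumulative_payoff_snoc [simp]:
  "cumulative_payoff \<phi> (h @ [p]) = cumulative_payoff \<phi> h + (case p of (a, b) \<Rightarrow> \<phi> a b)"
  by (simp add: cumulative_payoff_def)

lemma expected_cumulative_payoff:
  fixes \<phi> :: "'a::finite \<Rightarrow> 'a \<Rightarrow> real"
  shows "measure_pmf.expectation (hist_pmf \<sigma>X \<sigma>Y T) (cumulative_payoff \<phi>) =
    (\<Sum>t<T. exp_round \<phi> \<sigma>X \<sigma>Y t)"
proof (induction T)
  case 0
  then show ?case by simp
next
  case (Suc T)
  let ?H = "hist_pmf \<sigma>X \<sigma>Y T"
  have "measure_pmf.expectation (hist_pmf \<sigma>X \<sigma>Y (Suc T)) (cumulative_payoff \<phi>) =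
      measure_pmf.expectation ?H (\<lambda>h. cumulative_payoff \<phi> h + phi_mix \<phi> (\<sigma>X h) (\<sigma>Y h))"
    unfolding expectation_hist_pmf_Suc cumulative_payoff_snoc phi_mix_def
    by (simp add: integrable_measure_pmf_finite)
  also have "\<dots> = measure_pmf.expectation ?H (cumulative_payoff \<phi>) + exp_round \<phi> \<sigma>X \<sigma>Y T"
    unfolding exp_round_eq_expectation_hist
    by (simp add: integrable_measure_pmf_finite finite_set_hist_pmf)
  finally show ?case by (simp add: Suc.IH)
qed

lemma second_moment_cumulative_payoff_le:
  fixes \<phi> :: "'a::finite \<Rightarrow> 'a \<Rightarrow> real"
  assumes B: "\<And>a b. \<bar>\<phi> a b\<bar> \<le> B"
    and steer: "\<And>h \<rho>. cumulative_payoff \<phi> h * phi_mix \<phi> (\<sigma>X h) \<rho> \<le> 0"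
  shows "measure_pmf.expectation (hist_pmf \<sigma>X \<sigma>Y T) (\<lambda>h. (cumulative_payoff \<phi> h)\<^sup>2) \<le> T * B\<^sup>2"
proof (induction T)
  case 0
  then show ?case by simp
next
  case (Suc T)
  let ?H = "hist_pmf \<sigma>X \<sigma>Y T"
  have B': "\<bar>case p of (a, b) \<Rightarrow> \<phi> a b\<bar> \<le> B" for p
    using B by (simp split: prod.split)
  have "measure_pmf.expectation (hist_pmf \<sigma>X \<sigma>Y (Suc T)) (\<lambda>h. (cumulative_payoff \<phi> h)\<^sup>2) =
      measure_pmf.expectation ?H (\<lambda>h. measure_pmf.expectation (pair_pmf (\<sigma>X h) (\<sigma>Y h))
        (\<lambda>p. (cumulative_payoff \<phi> h + (case p of (a, b) \<Rightarrow> \<phi> a b))\<^sup>2))"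
    by (simp only: expectation_hist_pmf_Suc cumulative_payoff_snoc)
  also have "\<dots> \<le> measure_pmf.expectation ?H (\<lambda>h. (cumulative_payoff \<phi> h)\<^sup>2 + B\<^sup>2)"
    using steer B'
    by (intro integral_mono integrable_measure_pmf_finite finite_set_hist_pmf
        expectation_square_shift_le) (simp_all add: phi_mix_def)
  also have "\<dots> = measure_pmf.expectation ?H (\<lambda>h. (cumulative_payoff \<phi> h)\<^sup>2) + B\<^sup>2"
    by (simp add: integrable_measure_pmf_finite finite_set_hist_pmf)
  finally show ?case using Suc.IH by (simp add: algebra_simps)
qed

lemma autocratic_if_steers_toward_zero:
  fixes \<phi> :: "'a::finite \<Rightarrow> 'a \<Rightarrow> real"
  assumes steer: "\<And>h \<rho>. cumulative_payoff \<phi> h * phi_mix \<phi> (\<sigma>X h) \<rho> \<le> 0"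
  shows "autocratic \<phi> 1 \<sigma>X"
proof -
  obtain B where B: "\<And>a b. \<bar>\<phi> a b\<bar> \<le> B" using payoff_boundedE[of \<phi>] by blast
  then have "0 \<le> B" using abs_ge_zero order_trans by blast
  have "(\<lambda>T. (\<Sum>t\<le>T. exp_round \<phi> \<sigma>X \<sigma>Y t) / real (T + 1)) \<longlonglongrightarrow> 0" for \<sigma>Y
  proof (rule Lim_null_comparison)
    have "(\<lambda>T. sqrt (real (T + 1)) / real (T + 1)) \<longlonglongrightarrow> 0" by real_asymp
    then show "(\<lambda>T. B * (sqrt (real (T + 1)) / real (T + 1))) \<longlonglongrightarrow> 0"
      by (rule tendsto_mult_right_zero)
    show "\<forall>\<^sub>F T in sequentially. norm ((\<Sum>t\<le>T. exp_round \<phi> \<sigma>X \<sigma>Y t) / real (T + 1))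
        \<le> B * (sqrt (real (T + 1)) / real (T + 1))"
    proof (intro always_eventually allI)
      fix T
      define n where "n = real (T + 1)"
      define S where "S = (\<Sum>t\<le>T. exp_round \<phi> \<sigma>X \<sigma>Y t)"
      have "S = measure_pmf.expectation (hist_pmf \<sigma>X \<sigma>Y (Suc T)) (cumulative_payoff \<phi>)"
        unfolding S_def expected_cumulative_payoff lessThan_Suc_atMost ..
      then have "S\<^sup>2 \<le> n * B\<^sup>2"
        using square_expectation_le[OF finite_set_hist_pmf, of \<sigma>X \<sigma>Y "Suc T" "cumulative_payoff \<phi>"]
          second_moment_cumulative_payoff_le[OF B steer, of \<sigma>Y "Suc T"]
        by (simp add: n_def)
      then have "\<bar>S\<bar> \<le> sqrt n * B"
        using \<open>0 \<le> B\<close> by (metis real_sqrt_abs real_sqrt_le_mono real_sqrt_mult abs_of_nonneg)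
      then have "\<bar>S\<bar> / n \<le> sqrt n * B / n"
        by (simp add: n_def divide_right_mono)
      then show "norm (S / n) \<le> B * (sqrt n / n)"
        by (simp add: n_def mult.commute)
    qed
  qed
  then show ?thesis by (simp add: autocratic_def)
qed

definition switching_strategy :: "('a \<Rightarrow> 'a \<Rightarrow> real) \<Rightarrow> 'a pmf \<Rightarrow> 'a pmf \<Rightarrow> 'a strategy" where
  "switching_strategy \<phi> p q h = (if 0 < cumulative_payoff \<phi> h then q else p)"

lemma switching_strategy_steers_toward_zero:
  fixes \<phi> :: "'a::finite \<Rightarrow> 'a \<Rightarrow> real"
  assumes p: "\<And>b. 0 \<le> phi_mix \<phi> p (return_pmf b)" and q: "\<And>b. phi_mix \<phi> q (return_pmf b) \<le> 0"
  shows "cumulative_payoff \<phi> h * phi_mix \<phi> (switching_strategy \<phi> p q h) \<rho> \<le> 0"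
proof (cases "0 < cumulative_payoff \<phi> h")
  case True
  have "phi_mix \<phi> q \<rho> \<le> 0" using q by (rule phi_mix_le_if_pure_le)
  with True show ?thesis by (simp add: switching_strategy_def mult_nonneg_nonpos)
next
  case False
  have "0 \<le> phi_mix \<phi> p \<rho>" using p by (rule phi_mix_ge_if_pure_ge)
  with False show ?thesis by (simp add: switching_strategy_def mult_nonpos_nonneg)
qed

theorem proposition12:
  fixes \<phi> :: "'a::finite \<Rightarrow> 'a \<Rightarrow> real"
  assumes "\<And>a b. \<phi> a b = \<phi> b a"
  shows "enforceable \<phi> \<longleftrightarrow>
           has_trivial_autocratic \<phi> \<or>
           (SUP \<tau>X. INF \<tau>Y. phi_mix \<phi> \<tau>X \<tau>Y) = 0"
proof -
  have "enforceable \<phi> \<longleftrightarrow> maxmin_value \<phi> = 0"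
  proof
    assume "enforceable \<phi>"
    then obtain \<delta> \<sigma>X where "autocratic \<phi> \<delta> \<sigma>X" "0 \<le> \<delta>" by (auto simp: enforceable_def)
    then show "maxmin_value \<phi> = 0"
      using maxmin_value_nonpos_if_autocratic[of \<phi>, OF assms] maxmin_value_nonneg_if_autocratic
      by (meson order.antisym)
  next
    assume "maxmin_value \<phi> = 0"
    then obtain p q where "\<And>b. 0 \<le> phi_mix \<phi> p (return_pmf b)" "\<And>b. phi_mix \<phi> q (return_pmf b) \<le> 0"
      using nonneg_mixed_actionE[of \<phi>, OF assms] nonpos_mixed_actionE[of \<phi>, OF assms]
      by (metis order.refl)
    then have "autocratic \<phi> 1 (switching_strategy \<phi> p q)"
      by (intro autocratic_if_steers_toward_zero switching_strategy_steers_toward_zero)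
    then show "enforceable \<phi>" by (auto simp: enforceable_def)
  qed
  then show ?thesis
    using maxmin_value_eq_0_if_trivial_autocratic[of \<phi>, OF assms] by (auto simp: maxmin_value_def)
qed

end
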